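(* Let $p\ge 3$ be an integer and let $n\ge p+2$ be an integer. Then $\mathrm{conv}^{\leq p}(DW_n)\ge \frac{p-1}{(p-2)^2+1}\cdot(n-2)$.
   Context: For $n\ge 5$, the double wheel $DW_n$ is the graph obtained from a cycle on $n-2$ vertices by adding two new vertices, each adjacent to all vertices of the cycle (the two new vertices are not adjacent to each other). For an oriented graph $D$ and $X\subseteq V(D)$, the inversion of $X$ reverses every arc with both endvertices in $X$; a $(\leq p)$-inversion is the inversion of a set of at most $p$ vertices. $\mathrm{conv}^{\leq p}(G)$ is the minimum number of $(\leq p)$-inversions transforming an orientation of $G$ into its converse (all arcs reversed); it does not depend on the orientation. *)

theory Defs
  imports Complex_Main
begin

text \<open>The double wheel DW_n has vertex set {0..<n}: the cycle
  0,1,...,n-3 (on n-2 vertices) and two hubs n-2 and n-1, each adjacent to all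
  cycle vertices (the hubs are not adjacent).\<close>

definition DW_edges :: "nat \<Rightarrow> nat set set" where
  "DW_edges n =
     {{i, Suc i mod (n - 2)} | i. i < n - 2} \<union>
     {{h, i} | h i. h \<in> {n - 2, n - 1} \<and> i < n - 2}"

definition is_orientation :: "nat set set \<Rightarrow> (nat \<times> nat) set \<Rightarrow> bool" where
  "is_orientation E D \<longleftrightarrow>
     (\<forall>(u, v) \<in> D. u \<noteq> v \<and> {u, v} \<in> E) \<and>
     (\<forall>u v. u \<noteq> v \<and> {u, v} \<in> E \<longrightarrow> (u, v) \<in> D \<or> (v, u) \<in> D) \<and>
     (\<forall>u v. (u, v) \<in> D \<longrightarrow> (v, u) \<notin> D)"

definition invert :: "nat set \<Rightarrow> (nat \<times> nat) set \<Rightarrow> (nat \<times> nat) set" where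
  "invert X D =
     {(u, v). (u, v) \<in> D \<and> \<not> (u \<in> X \<and> v \<in> X)} \<union>
     {(u, v). (v, u) \<in> D \<and> u \<in> X \<and> v \<in> X}"

definition conv_le :: "nat \<Rightarrow> nat set \<Rightarrow> (nat \<times> nat) set \<Rightarrow> nat" where
  "conv_le p V D =
     (LEAST k. \<exists>Xs. length Xs = k \<and> (\<forall>X \<in> set Xs. X \<subseteq> V \<and> card X \<le> p) \<and>
                     foldl (\<lambda>D' X. invert X D') D Xs = converse D)"

end

(*
  Weight every cycle edge of DW_n by p - 3 and every spoke by 1, so that each cycle vertex
  carries weight p - 1 and the total is (n - 2)(p - 1).  Reversing an orientation by
  inversions inverts every edge an odd, hence positive, number of times, so the total weight
  is at most the sum over the inverted sets of the weight they span.  A set of at most p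
  vertices that misses part of the cycle spans fewer cycle edges than cycle vertices, which
  bounds its weight by (p - 2)^2 + 1.  A set can only contain the whole cycle when n = p + 2;
  then at least two inversions are needed, which gives the bound directly for p >= 6, while
  for p <= 5 the weight bound (p - 3) p <= (p - 2)^2 + 1 survives.
*)

theory Submission
  imports Defs
begin

abbreviation invert_seq :: "nat set list \<Rightarrow> (nat \<times> nat) set \<Rightarrow> (nat \<times> nat) set" where
  "invert_seq Xs D \<equiv> foldl (\<lambda>D' X. invert X D') D Xs"

definition cover_count :: "nat set list \<Rightarrow> nat set \<Rightarrow> nat" where
  "cover_count Xs e = length (filter (\<lambda>X. e \<subseteq> X) Xs)"

lemma cover_count_Nil [simp]: "cover_count [] e = 0"
  by (simp add: cover_count_def)

lemma cover_count_Cons [simp]: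
  "cover_count (X # Xs) e = of_bool (e \<subseteq> X) + cover_count Xs e"
  by (simp add: cover_count_def)

lemma cover_count_snoc [simp]:
  "cover_count (Xs @ [X]) e = cover_count Xs e + of_bool (e \<subseteq> X)"
  by (simp add: cover_count_def)

lemma mem_invert_iff:
  "(a, b) \<in> invert X D \<longleftrightarrow> (if a \<in> X \<and> b \<in> X then (b, a) \<in> D else (a, b) \<in> D)"
  by (auto simp: invert_def)

lemma mem_invert_seq_iff:
  "(a, b) \<in> invert_seq Xs D \<longleftrightarrow>
     (a, b) \<in> D \<and> even (cover_count Xs {a, b}) \<or> (b, a) \<in> D \<and> odd (cover_count Xs {a, b})"
proof (induction Xs arbitrary: a b rule: rev_induct)
  case Nil
  show ?case by simp
next
  case (snoc X Xs)
  have "{b, a} = {a, b}"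
    by blast
  then have IH: "(a, b) \<in> invert_seq Xs D \<longleftrightarrow>
      (a, b) \<in> D \<and> even (cover_count Xs {a, b}) \<or> (b, a) \<in> D \<and> odd (cover_count Xs {a, b})"
    "(b, a) \<in> invert_seq Xs D \<longleftrightarrow>
      (b, a) \<in> D \<and> even (cover_count Xs {a, b}) \<or> (a, b) \<in> D \<and> odd (cover_count Xs {a, b})"
    using snoc.IH[of a b] snoc.IH[of b a] by simp_all
  show ?case
    unfolding foldl_append foldl.simps mem_invert_iff using IH by auto
qed

lemma cover_count_edge_odd:
  assumes "is_orientation E D" and "invert_seq Xs D = converse D"
    and "e \<in> E" and "card e = 2"
  shows "odd (cover_count Xs e)"
proof -
  obtain a b where e: "e = {a, b}" and "a \<noteq> b"
    using assms(4) unfolding card_2_iff by blast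
  have arc: "(a, b) \<in> D \<or> (b, a) \<in> D"
    using assms(1,3) e \<open>a \<noteq> b\<close> unfolding is_orientation_def by blast
  have asym: "(v, u) \<notin> D" if "(u, v) \<in> D" for u v
    using assms(1) that unfolding is_orientation_def by blast
  from arc show ?thesis
  proof
    assume "(a, b) \<in> D"
    then have "(b, a) \<in> invert_seq Xs D"
      using assms(2) by simp
    then show ?thesis
      using asym[of a b] \<open>(a, b) \<in> D\<close> e by (simp add: mem_invert_seq_iff insert_commute)
  next
    assume "(b, a) \<in> D"
    then have "(a, b) \<in> invert_seq Xs D"
      using assms(2) by simp
    then show ?thesis
      using asym[of b a] \<open>(b, a) \<in> D\<close> e by (simp add: mem_invert_seq_iff)
  qed
qed

lemma conv_le_attained:
  assumes "is_orientation E D" and "finite V" and "\<forall>e \<in> E. e \<subseteq> V" and "2 \<le> p"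
  obtains Xs where "length Xs = conv_le p V D" and "\<forall>X \<in> set Xs. X \<subseteq> V \<and> card X \<le> p"
    and "invert_seq Xs D = converse D"
proof -
  have arc_edge: "u \<noteq> v \<and> {u, v} \<in> E" and asym: "(v, u) \<notin> D" if "(u, v) \<in> D" for u v
    using assms(1) that unfolding is_orientation_def by auto
  have irrefl: "u \<noteq> v" and in_V: "u \<in> V" "v \<in> V" if "(u, v) \<in> D" for u v
    using arc_edge[OF that] assms(3) by auto
  have "D \<subseteq> V \<times> V"
    using in_V by auto
  then have "finite ((\<lambda>(u, v). {u, v}) ` D)"
    using assms(2) by (meson finite_SigmaI finite_imageI finite_subset)
  \<comment> \<open>Inverting each arc of D once, as a 2-set, reverses D.\<close>
  then obtain xs where xs: "set xs = (\<lambda>(u, v). {u, v}) ` D" "distinct xs"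
    using finite_distinct_list by metis
  have once: "cover_count xs {a, b} = 1" if arc: "(a, b) \<in> D \<or> (b, a) \<in> D" for a b
  proof -
    have "a \<noteq> b"
      using arc irrefl by blast
    have "X = {a, b}" if "X \<in> set xs" "{a, b} \<subseteq> X" for X
    proof -
      obtain u v where "X = {u, v}"
        using \<open>X \<in> set xs\<close> xs(1) by auto
      then show ?thesis
        using \<open>{a, b} \<subseteq> X\<close> \<open>a \<noteq> b\<close> by auto
    qed
    moreover have "{a, b} \<in> set xs"
      using arc xs(1) by (auto simp: image_iff insert_commute)
    ultimately have "{X \<in> set xs. {a, b} \<subseteq> X} = {{a, b}}"
      by blast
    then show ?thesis
      using distinct_length_filter[OF xs(2)] by (simp add: cover_count_def Int_def conj_commute)
  qed
  have "invert_seq xs D = converse D"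
  proof (intro set_eqI, clarify)
    fix a b
    show "(a, b) \<in> invert_seq xs D \<longleftrightarrow> (a, b) \<in> converse D"
      using once[of a b] asym[of a b] asym[of b a] by (auto simp: mem_invert_seq_iff)
  qed
  moreover have "\<forall>X \<in> set xs. X \<subseteq> V \<and> card X \<le> p"
    using xs(1) in_V assms(4) by (auto simp: card_insert_if)
  ultimately have "\<exists>k Xs. length Xs = k \<and> (\<forall>X \<in> set Xs. X \<subseteq> V \<and> card X \<le> p) \<and>
      invert_seq Xs D = converse D" by blast
  from LeastI_ex[OF this] show ?thesis
    using that unfolding conv_le_def by blast
qed

lemma sum_cover_count:
  fixes w :: "'i \<Rightarrow> nat"
  assumes "finite I"
  shows "(\<Sum>i\<in>I. w i * cover_count Xs (e i)) = (\<Sum>X\<leftarrow>Xs. \<Sum>i\<in>{i \<in> I. e i \<subseteq> X}. w i)"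
proof (induction Xs)
  case Nil
  show ?case by simp
next
  case (Cons X Xs)
  have "(\<Sum>i\<in>I. w i * cover_count (X # Xs) (e i)) =
      (\<Sum>i\<in>I. if e i \<subseteq> X then w i else 0) + (\<Sum>i\<in>I. w i * cover_count Xs (e i))"
    by (auto simp: sum.distrib[symmetric] intro!: sum.cong)
  also have "\<dots> = (\<Sum>X\<leftarrow>X # Xs. \<Sum>i\<in>{i \<in> I. e i \<subseteq> X}. w i)"
    using Cons.IH by (simp add: sum.inter_filter[OF assms])
  finally show ?case .
qed

lemma weighted_cover_bound:
  fixes w :: "'i \<Rightarrow> nat"
  assumes "finite I" and "\<forall>i \<in> I. 0 < cover_count Xs (e i)"
    and "\<forall>X \<in> set Xs. (\<Sum>i\<in>{i \<in> I. e i \<subseteq> X}. w i) \<le> B"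
  shows "(\<Sum>i\<in>I. w i) \<le> length Xs * B"
proof -
  have "(\<Sum>i\<in>I. w i) \<le> (\<Sum>i\<in>I. w i * cover_count Xs (e i))"
    using assms(2) by (intro sum_mono) (simp add: Suc_le_eq)
  also have "\<dots> = (\<Sum>X\<leftarrow>Xs. \<Sum>i\<in>{i \<in> I. e i \<subseteq> X}. w i)"
    using assms(1) by (rule sum_cover_count)
  also have "\<dots> \<le> (\<Sum>X\<leftarrow>Xs. B)"
    using assms(3) by (intro sum_list_mono) simp
  also have "\<dots> = length Xs * B"
    by (simp add: sum_list_triv)
  finally show ?thesis .
qed

lemma DW_edges_subset:
  assumes "3 \<le> n" and "e \<in> DW_edges n"
  shows "e \<subseteq> {..<n}"
proof -
  have "Suc i mod (n - 2) < n" for i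
    using assms(1) mod_less_divisor[of "n - 2" "Suc i"] by linarith
  then show ?thesis
    using assms unfolding DW_edges_def by auto
qed

text \<open>With m = n - 2, the edges of DW_n are indexed by {..<m} \<times> {0, 1, 2}: (i, 0) is the
  cycle edge from i to its successor, (i, 1) and (i, 2) join i to the hubs m and m + 1.\<close>

fun dw_edge :: "nat \<Rightarrow> nat \<times> nat \<Rightarrow> nat set" where
  "dw_edge m (i, k) = (if k = 0 then {i, Suc i mod m} else {m + k - 1, i})"

fun dw_weight :: "nat \<Rightarrow> nat \<times> nat \<Rightarrow> nat" where
  "dw_weight p (i, k) = (if k = 0 then p - 3 else 1)"

lemma dw_edge_in_DW_edges:
  assumes "2 \<le> m" and "ik \<in> {..<m} \<times> {0, 1, 2}"
  shows "dw_edge m ik \<in> DW_edges (m + 2)" and "card (dw_edge m ik) = 2"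
proof -
  obtain i k where ik: "ik = (i, k)" "i < m" "k \<in> {0, 1, 2}"
    using assms(2) by auto
  have "Suc i mod m \<noteq> i"
    using ik(2) assms(1) by (cases "Suc i = m") auto
  moreover have "{i, Suc i mod m} \<in> DW_edges (m + 2)"
    using ik(2) unfolding DW_edges_def by auto
  moreover have "{h, i} \<in> DW_edges (m + 2)" if "h \<in> {m, Suc m}" for h
    using ik(2) that unfolding DW_edges_def by auto
  ultimately show "dw_edge m ik \<in> DW_edges (m + 2)" and "card (dw_edge m ik) = 2"
    using ik by auto
qed

lemma sum_dw_weight:
  assumes "3 \<le> p"
  shows "(\<Sum>ik\<in>{..<m} \<times> {0, 1, 2}. dw_weight p ik) = m * (p - 1)"
proof -
  have "(\<Sum>ik\<in>{..<m} \<times> {0, 1, 2}. dw_weight p ik) =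
      (\<Sum>i<m. \<Sum>k\<in>{0, 1, 2}. dw_weight p (i, k))"
    by (rule sum.cartesian_product')
  also have "\<dots> = m * (p - 1)"
    using assms by (simp add: algebra_simps flip: Suc_diff_le mult_Suc_right)
  finally show ?thesis .
qed

lemma sum_dw_weight_inside:
  "(\<Sum>ik\<in>{ik \<in> {..<m} \<times> {0, 1, 2}. dw_edge m ik \<subseteq> X}. dw_weight p ik) =
     (p - 3) * card {i. i < m \<and> i \<in> X \<and> Suc i mod m \<in> X}
       + card (X \<inter> {m, Suc m}) * card (X \<inter> {..<m})"
proof -
  have finite_I: "finite ({..<m} \<times> {0, 1, 2 :: nat})"
    by simp
  have cycle: "(\<Sum>i<m. (p - 3) * of_bool (i \<in> X \<and> Suc i mod m \<in> X)) =
      (p - 3) * card {i. i < m \<and> i \<in> X \<and> Suc i mod m \<in> X}"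
    by (simp add: Int_def)
  have hub: "(\<Sum>i<m. of_bool (h \<in> X \<and> i \<in> X)) = of_bool (h \<in> X) * card (X \<inter> {..<m})" for h
    by (cases "h \<in> X") (simp_all add: Int_commute)
  have hubs: "card (X \<inter> {m, Suc m}) = of_bool (m \<in> X) + of_bool (Suc m \<in> X)"
    by (cases "m \<in> X"; cases "Suc m \<in> X") auto
  have "(\<Sum>ik\<in>{ik \<in> {..<m} \<times> {0, 1, 2}. dw_edge m ik \<subseteq> X}. dw_weight p ik) =
      (\<Sum>i<m. \<Sum>k\<in>{0, 1, 2}. if dw_edge m (i, k) \<subseteq> X then dw_weight p (i, k) else 0)"
    by (simp only: sum.inter_filter[OF finite_I] sum.cartesian_product')
  also have "\<dots> = (\<Sum>i<m. (p - 3) * of_bool (i \<in> X \<and> Suc i mod m \<in> X)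
      + of_bool (m \<in> X \<and> i \<in> X) + of_bool (Suc m \<in> X \<and> i \<in> X))"
    by (intro sum.cong refl) simp
  also have "\<dots> = (p - 3) * card {i. i < m \<and> i \<in> X \<and> Suc i mod m \<in> X}
      + card (X \<inter> {m, Suc m}) * card (X \<inter> {..<m})"
    unfolding sum.distrib cycle hub hubs by (simp add: algebra_simps)
  finally show ?thesis .
qed

lemma card_cycle_pairs_less:
  assumes "X \<inter> {..<m} \<noteq> {}" and "\<not> {..<m} \<subseteq> X"
  shows "card {i. i < m \<and> i \<in> X \<and> Suc i mod m \<in> X} < card (X \<inter> {..<m})"
proof -
  have "\<exists>i<m. i \<in> X \<and> Suc i mod m \<notin> X"
  proof (rule ccontr)
    assume "\<not> ?thesis"
    then have closed: "Suc i mod m \<in> X" if "i < m" "i \<in> X" for i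
      using that by blast
    obtain i0 where "i0 \<in> X" "i0 < m"
      using assms(1) by auto
    have orbit: "(i0 + k) mod m \<in> X" for k
    proof (induction k)
      case 0
      show ?case using \<open>i0 \<in> X\<close> \<open>i0 < m\<close> by simp
    next
      case (Suc k)
      have "(i0 + Suc k) mod m = Suc ((i0 + k) mod m) mod m"
        by (simp add: mod_Suc_eq)
      then show ?case
        using closed[OF _ Suc.IH] \<open>i0 < m\<close> by simp
    qed
    have "j \<in> X" if "j < m" for j
      using orbit[of "m - i0 + j"] \<open>i0 < m\<close> that by simp
    then show False
      using assms(2) by auto
  qed
  then obtain i where "i < m" "i \<in> X" "Suc i mod m \<notin> X"
    by blast
  then have "{i. i < m \<and> i \<in> X \<and> Suc i mod m \<in> X} \<subset> X \<inter> {..<m}"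
    by auto
  then show ?thesis
    by (intro psubset_card_mono) auto
qed

lemma sum_dw_weight_inside_le:
  assumes "3 \<le> p" and "p \<le> m" and "p < m \<or> p \<le> 5"
    and "X \<subseteq> {..<m + 2}" and "card X \<le> p"
  shows "(\<Sum>ik\<in>{ik \<in> {..<m} \<times> {0, 1, 2}. dw_edge m ik \<subseteq> X}. dw_weight p ik)
           \<le> (p - 2)^2 + 1"
proof -
  define pairs where "pairs = card {i. i < m \<and> i \<in> X \<and> Suc i mod m \<in> X}"
  define c where "c = card (X \<inter> {..<m})"
  define h where "h = card (X \<inter> {m, Suc m})"
  have "finite X"
    using assms(4) finite_subset by blast
  have "c + h = card (X \<inter> ({..<m} \<union> {m, Suc m}))"
    unfolding c_def h_def Int_Un_distrib using \<open>finite X\<close>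
    by (intro card_Un_disjoint[symmetric]) auto
  also have "\<dots> \<le> card X"
    using \<open>finite X\<close> by (intro card_mono) auto
  finally have "c + h \<le> p"
    using assms(5) by simp
  have "h \<le> card {m, Suc m}"
    unfolding h_def by (intro card_mono) auto
  then have "h \<le> 2"
    by simp
  have "pairs \<le> c"
    unfolding pairs_def c_def by (intro card_mono) auto
  consider (empty) "c = 0" | (full) "{..<m} \<subseteq> X" | (partial) "c \<noteq> 0" "\<not> {..<m} \<subseteq> X"
    by blast
  then have "(p - 3) * pairs + h * c \<le> (p - 2)^2 + 1"
  proof cases
    case empty
    then show ?thesis
      using \<open>pairs \<le> c\<close> by simp
  next
    case full
    then have "card {..<m} \<le> c"
      unfolding c_def by (intro card_mono) auto
    then have "m \<le> c"
      by simp
    then have "h = 0" "c = p" "p \<le> 5"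
      using \<open>c + h \<le> p\<close> assms(2,3) by auto
    have "(p - 3) * pairs + h * c \<le> (p - 3) * p"
      using \<open>pairs \<le> c\<close> \<open>c = p\<close> \<open>h = 0\<close> by simp
    also have "\<dots> \<le> (p - 2)^2 + 1"
    proof -
      have "p = 3 \<or> p = 4 \<or> p = 5"
        using \<open>p \<le> 5\<close> assms(1) by auto
      then show ?thesis
        by (auto simp: power2_eq_square)
    qed
    finally show ?thesis .
  next
    case partial
    then have "pairs < c"
      unfolding pairs_def c_def by (intro card_cycle_pairs_less) auto
    obtain q where q: "p = q + 3"
      using assms(1) le_Suc_ex by (metis add.commute)
    then have "p - 3 = q"
      by simp
    have "q * pairs \<le> q * (q + 2 - h)"
      using \<open>pairs < c\<close> \<open>c + h \<le> p\<close> q by (intro mult_le_mono2) linarith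
    moreover have "h * c \<le> h * (q + 3 - h)"
      using \<open>c + h \<le> p\<close> q by (intro mult_le_mono2) linarith
    ultimately have "(p - 3) * pairs + h * c \<le> q * (q + 2 - h) + h * (q + 3 - h)"
      unfolding \<open>p - 3 = q\<close> by (rule add_le_mono)
    also have "\<dots> \<le> (p - 2)^2 + 1"
    proof -
      have "h = 0 \<or> h = 1 \<or> h = 2"
        using \<open>h \<le> 2\<close> by auto
      then show ?thesis
        using q by (auto simp: power2_eq_square algebra_simps)
    qed
    finally show ?thesis .
  qed
  then show ?thesis
    unfolding sum_dw_weight_inside pairs_def c_def h_def .
qed

lemma dw_cover_length_ge_2:
  assumes "0 < m" and "p < m + 2" and "\<forall>X \<in> set Xs. X \<subseteq> {..<m + 2} \<and> card X \<le> p"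
    and "\<forall>ik \<in> {..<m} \<times> {0, 1, 2}. 0 < cover_count Xs (dw_edge m ik)"
  shows "2 \<le> length Xs"
proof (rule ccontr)
  assume "\<not> 2 \<le> length Xs"
  moreover have "Xs \<noteq> []"
    using assms(1,4) by force
  ultimately obtain X where X: "Xs = [X]"
    by (cases Xs) (auto simp: Suc_le_eq)
  then have inside: "dw_edge m ik \<subseteq> X" if "ik \<in> {..<m} \<times> {0, 1, 2}" for ik
    using assms(4) that by (auto simp: cover_count_def split: if_splits)
  have "{..<m + 2} \<subseteq> X"
  proof
    fix v
    assume "v \<in> {..<m + 2}"
    then consider "v < m" | "v = m" | "v = Suc m"
      by force
    then show "v \<in> X"
      using inside[of "(v, 0)"] inside[of "(0, 1)"] inside[of "(0, 2)"] assms(1) by cases auto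
  qed
  then have "X = {..<m + 2}"
    using assms(3) X by auto
  then show False
    using assms(2,3) X by simp
qed

lemma dw_cover_length_bound:
  assumes "3 \<le> p" and "p \<le> m" and "\<forall>X \<in> set Xs. X \<subseteq> {..<m + 2} \<and> card X \<le> p"
    and "\<forall>ik \<in> {..<m} \<times> {0, 1, 2}. 0 < cover_count Xs (dw_edge m ik)"
  shows "(real p - 1) / ((real p - 2)^2 + 1) * real m \<le> real (length Xs)"
proof -
  have den_pos: "0 < (real p - 2)^2 + 1"
    by (simp add: add_nonneg_pos)
  show ?thesis
  proof (cases "p < m \<or> p \<le> 5")
    case True
    have "(\<Sum>ik\<in>{..<m} \<times> {0, 1, 2}. dw_weight p ik) \<le> length Xs * ((p - 2)^2 + 1)"
    proof (rule weighted_cover_bound[OF _ assms(4)])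
      show "\<forall>X \<in> set Xs. (\<Sum>ik\<in>{ik \<in> {..<m} \<times> {0, 1, 2}. dw_edge m ik \<subseteq> X}. dw_weight p ik)
          \<le> (p - 2)^2 + 1"
        using sum_dw_weight_inside_le[OF assms(1,2) True] assms(3) by blast
    qed simp
    then have "m * (p - 1) \<le> length Xs * ((p - 2)^2 + 1)"
      unfolding sum_dw_weight[OF assms(1)] .
    then have "real (m * (p - 1)) \<le> real (length Xs * ((p - 2)^2 + 1))"
      by (rule of_nat_mono)
    moreover have "real (p - 1) = real p - 1" and "real (p - 2) = real p - 2"
      using assms(1) by auto
    ultimately have "real m * (real p - 1) \<le> real (length Xs) * ((real p - 2)^2 + 1)"
      by (simp add: distrib_left)
    then show ?thesis
      using den_pos by (simp add: divide_le_eq mult.commute mult.left_commute)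
  next
    case False
    then have "m = p" and "6 \<le> real p"
      using assms(2) by auto
    have "(real p - 1) * real p \<le> 2 * ((real p - 2)^2 + 1)"
    proof -
      have "0 \<le> (real p - 2) * (real p - 5)"
        using \<open>6 \<le> real p\<close> by simp
      then show ?thesis
        by (simp add: power2_eq_square algebra_simps)
    qed
    also have "\<dots> \<le> real (length Xs) * ((real p - 2)^2 + 1)"
      using dw_cover_length_ge_2[OF _ _ assms(3,4)] \<open>m = p\<close> assms(1) den_pos
      by (intro mult_right_mono) auto
    finally show ?thesis
      using \<open>m = p\<close> den_pos by (simp add: divide_le_eq mult.commute mult.left_commute)
  qed
qed

theorem mainTheorem19:
  fixes p n :: nat and D :: "(nat \<times> nat) set"
  assumes "p \<ge> 3" and "n \<ge> p + 2"
    and "is_orientation (DW_edges n) D"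
  shows "real (conv_le p {..<n} D) \<ge>
           (real p - 1) / ((real p - 2)^2 + 1) * (real n - 2)"
proof -
  define m where "m = n - 2"
  have n: "n = m + 2" and "p \<le> m"
    using assms(1,2) unfolding m_def by auto
  have edges: "\<forall>e \<in> DW_edges n. e \<subseteq> {..<n}"
    using DW_edges_subset assms(1,2) by simp
  have "2 \<le> p"
    using assms(1) by simp
  obtain Xs where length: "length Xs = conv_le p {..<n} D"
    and small: "\<forall>X \<in> set Xs. X \<subseteq> {..<n} \<and> card X \<le> p"
    and reverses: "invert_seq Xs D = converse D"
    using conv_le_attained[OF assms(3) finite_lessThan edges \<open>2 \<le> p\<close>] by blast
  have covered: "0 < cover_count Xs (dw_edge m ik)" if "ik \<in> {..<m} \<times> {0, 1, 2}" for ik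
  proof -
    have "odd (cover_count Xs (dw_edge m ik))"
      using dw_edge_in_DW_edges[OF _ that] \<open>p \<le> m\<close> assms(1) n
      by (intro cover_count_edge_odd[OF assms(3) reverses]) auto
    then show ?thesis
      by (rule odd_pos)
  qed
  have "(real p - 1) / ((real p - 2)^2 + 1) * real m \<le> real (length Xs)"
    using small covered n by (intro dw_cover_length_bound[OF assms(1) \<open>p \<le> m\<close>]) auto
  then show ?thesis
    using length n by simp
qed

end
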